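(* Let $a<b$ be real numbers and $\varphi:(a,b)\to\mathbb R$ a continuous function. Then for almost every $x\in(a,b)$ one of the following holds: (i) $\varphi$ is differentiable at $x$; (ii) there is a sequence $(x_k)_{k\in\mathbb N}$ converging to $x$ such that $0\in\partial^-\varphi(x_k)$ for all $k$, in particular $0\in\partial^-_L\varphi(x)$.
   Context: For $y\in(a,b)$, the viscosity subdifferential $\partial^-\varphi(y)$ is the set of $p\in\mathbb R$ such that there is a $C^1$ function $\psi$ on an open neighborhood $V$ of $y$ with $\psi(y)=\varphi(y)$, $\psi\leq\varphi$ on $V$ and $\psi'(y)=p$. The limiting subdifferential $\partial^-_L\varphi(x)$ is the set of $p$ for which there is a sequence $(x_k,p_k)\to(x,p)$ with $p_k\in\partial^-\varphi(x_k)$. *)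

theory Defs
  imports "HOL-Analysis.Analysis"
begin

definition C1_on :: "real set \<Rightarrow> (real \<Rightarrow> real) \<Rightarrow> bool" where
  "C1_on V \<psi> \<longleftrightarrow> (\<exists>\<psi>'. (\<forall>z\<in>V. (\<psi> has_real_derivative \<psi>' z) (at z)) \<and> continuous_on V \<psi>')"

definition visc_subdiff :: "real \<Rightarrow> real \<Rightarrow> (real \<Rightarrow> real) \<Rightarrow> real \<Rightarrow> real set" where
  "visc_subdiff a b \<phi> y = {p. \<exists>V \<psi>. open V \<and> y \<in> V \<and> V \<subseteq> {a<..<b} \<and> C1_on V \<psi> \<and>
      \<psi> y = \<phi> y \<and> (\<forall>z\<in>V. \<psi> z \<le> \<phi> z) \<and> (\<psi> has_real_derivative p) (at y)}"

definition lim_subdiff :: "real \<Rightarrow> real \<Rightarrow> (real \<Rightarrow> real) \<Rightarrow> real \<Rightarrow> real set" where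
  "lim_subdiff a b \<phi> x = {p. \<exists>xs ps. (\<forall>k. xs k \<in> {a<..<b} \<and> ps k \<in> visc_subdiff a b \<phi> (xs k)) \<and>
      xs \<longlonglongrightarrow> x \<and> ps \<longlonglongrightarrow> p}"

end

theory Submission
  imports Defs
begin

text \<open>
  Every local minimum of \<open>\<phi>\<close> in \<open>(a,b)\<close> is a point where \<open>0\<close> is a viscosity subgradient,
  and every point in the closure of the set \<open>Z\<close> of such points satisfies (ii). On the open set
  \<open>(a,b) - closure Z\<close> the function \<open>\<phi>\<close> has no local minimum, so on each compact interval
  there it increases up to a maximum point and decreases afterwards; by Lebesgue's theorem on
  monotone functions it is differentiable almost everywhere.

  Lebesgue's theorem for a monotone continuous \<open>F\<close> is proved with the Vitali covering theorem
  by comparing Lebesgue measure with the Lebesgue-Stieltjes measure of \<open>F\<close>: the points where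
  the slopes of \<open>F\<close> on small intervals around \<open>x\<close> are infinitely often below \<open>r\<close> and
  infinitely often above \<open>s > r\<close> form a null set, and so do the points where they are unbounded.
\<close>

text \<open>Two-sided intervals \<open>[u,v] \<ni> x\<close> shrinking to \<open>x\<close>, rather than increments \<open>x + h\<close>,
  because they are what the Vitali covering argument produces.\<close>

definition intervals_around :: "real \<Rightarrow> (real \<times> real) filter" where
  "intervals_around x = (INF d\<in>{0<..}. principal {(u, v). u \<le> x \<and> x \<le> v \<and> u < v \<and> v - u < d})"

lemma eventually_intervals_around:
  "eventually P (intervals_around x) \<longleftrightarrow>
     (\<exists>d>0. \<forall>u v. u \<le> x \<longrightarrow> x \<le> v \<longrightarrow> u < v \<longrightarrow> v - u < d \<longrightarrow> P (u, v))"
  unfolding intervals_around_def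
  by (subst eventually_INF_base) (auto simp: eventually_principal intro!: bexI[where x = "min a b" for a b])

lemma frequently_intervals_around:
  "frequently P (intervals_around x) \<longleftrightarrow>
     (\<forall>d>0. \<exists>u v. u \<le> x \<and> x \<le> v \<and> u < v \<and> v - u < d \<and> P (u, v))"
  unfolding frequently_def eventually_intervals_around by auto

lemma intervals_around_neq_bot: "intervals_around x \<noteq> bot"
proof
  assume "intervals_around x = bot"
  then obtain d :: real where "d > 0" and no: "\<And>v. x \<le> v \<Longrightarrow> x < v \<Longrightarrow> v - x < d \<Longrightarrow> False"
    unfolding trivial_limit_def eventually_intervals_around by blast
  show False
    using no[of "x + d/2"] \<open>d > 0\<close> by linarith
qed

lemma eventually_intervals_around_less: "\<forall>\<^sub>F (u, v) in intervals_around x. u < v"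
  unfolding eventually_intervals_around by (auto intro: exI[of _ 1])

lemma eventually_intervals_around_subset:
  assumes "open U" "x \<in> U"
  shows "\<forall>\<^sub>F (u, v) in intervals_around x. {u..v} \<subseteq> U"
proof -
  obtain e where "e > 0" "ball x e \<subseteq> U"
    using assms openE by blast
  then show ?thesis
    unfolding eventually_intervals_around
    by (intro exI[of _ e]) (force simp: subset_eq dist_real_def)
qed

lemma filterlim_min_max_intervals_around:
  "filterlim (\<lambda>y. (min x y, max x y)) (intervals_around x) (at x)"
  unfolding filterlim_def le_filter_def eventually_filtermap eventually_intervals_around
  by (auto simp: eventually_at dist_real_def)

definition slope :: "(real \<Rightarrow> real) \<Rightarrow> real \<times> real \<Rightarrow> real" where
  "slope F = (\<lambda>(u, v). (F v - F u) / (v - u))"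

lemma has_real_derivative_if_slope_tendsto:
  assumes "(slope F \<longlongrightarrow> L) (intervals_around x)"
  shows "(F has_real_derivative L) (at x)"
proof -
  have "((\<lambda>y. slope F (min x y, max x y)) \<longlongrightarrow> L) (at x)"
    using filterlim_compose[OF assms filterlim_min_max_intervals_around] .
  moreover have "slope F (min x y, max x y) = (F y - F x) / (y - x)" for y
    by (cases "x \<le> y") (auto simp: slope_def min_def max_def divide_simps algebra_simps)
  ultimately show ?thesis
    by (simp add: has_field_derivative_iff)
qed

lemma Vitali_covering_intervals:
  fixes S :: "real set"
  assumes "\<And>x. x \<in> S \<Longrightarrow> \<exists>\<^sub>F (u, v) in intervals_around x. P u v"
  obtains C where "countable C" "\<And>u v. (u, v) \<in> C \<Longrightarrow> u < v \<and> P u v"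
    "disjoint_family_on (\<lambda>(u, v). {u..v}) C" "negligible (S - (\<Union>(u, v)\<in>C. {u..v}))"
proof -
  let ?K = "{(u, v). u < v \<and> P u v}"
  let ?c = "\<lambda>(u::real, v::real). (u + v) / 2"
  let ?r = "\<lambda>(u::real, v::real). (v - u) / 2"
  have cball_eq: "cball (?c i) (?r i) = (\<lambda>(u, v). {u..v}) i" for i
    by (cases i) (auto simp: cball_eq_atLeastAtMost field_simps)
  obtain C where C: "countable C" "C \<subseteq> ?K"
     "pairwise (\<lambda>i j. disjnt (cball (?c i) (?r i)) (cball (?c j) (?r j))) C"
     "negligible (S - (\<Union>i\<in>C. cball (?c i) (?r i)))"
  proof (rule Vitali_covering_theorem_cballs[of ?K ?r S ?c])
    show "\<And>i. i \<in> ?K \<Longrightarrow> 0 < ?r i" by auto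
    fix x d assume "x \<in> S" "(0::real) < d"
    then obtain u v where "u \<le> x" "x \<le> v" "u < v" "v - u < d" "P u v"
      using assms[of x] unfolding frequently_intervals_around by auto
    then show "\<exists>i. i \<in> ?K \<and> x \<in> cball (?c i) (?r i) \<and> ?r i < d"
      by (intro exI[of _ "(u, v)"]) (auto simp: cball_eq_atLeastAtMost field_simps)
  qed blast
  show ?thesis
  proof (rule that[OF C(1)])
    show "\<And>u v. (u, v) \<in> C \<Longrightarrow> u < v \<and> P u v"
      using C(2) by auto
    show "disjoint_family_on (\<lambda>(u, v). {u..v}) C"
      using C(3) unfolding disjoint_family_on_def pairwise_def disjnt_def cball_eq by blast
    show "negligible (S - (\<Union>(u, v)\<in>C. {u..v}))"
      using C(4) unfolding cball_eq by simp
  qed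
qed

lemma Vitali_covering_intervals_within:
  fixes S :: "real set"
  assumes "open G" and "\<And>x. x \<in> S \<Longrightarrow> \<exists>\<^sub>F (u, v) in intervals_around x. P u v"
  obtains C where "countable C" "\<And>u v. (u, v) \<in> C \<Longrightarrow> u < v \<and> {u..v} \<subseteq> G \<and> P u v"
    "disjoint_family_on (\<lambda>(u, v). {u..v}) C" "negligible (S \<inter> G - (\<Union>(u, v)\<in>C. {u..v}))"
proof (rule Vitali_covering_intervals)
  fix x assume "x \<in> S \<inter> G"
  then have "\<exists>\<^sub>F p in intervals_around x. (case p of (u, v) \<Rightarrow> {u..v} \<subseteq> G) \<and> (case p of (u, v) \<Rightarrow> P u v)"
    using assms by (intro frequently_eventually_conj eventually_intervals_around_subset) auto
  then show "\<exists>\<^sub>F (u, v) in intervals_around x. {u..v} \<subseteq> G \<and> P u v"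
    by (simp add: case_prod_unfold)
qed (use that in blast)

lemma negligible_UN_Icc_Diff_UN_Ioo:
  fixes C :: "(real \<times> real) set"
  assumes "countable C"
  shows "negligible ((\<Union>(u, v)\<in>C. {u..v}) - (\<Union>(u, v)\<in>C. {u<..<v}))"
proof -
  have "countable (fst ` C \<union> snd ` C)"
    using assms by auto
  then have "negligible (fst ` C \<union> snd ` C)"
    by (simp add: negligible_iff_null_sets null_sets_completionI countable_imp_null_set_lborel)
  moreover have "(\<Union>(u, v)\<in>C. {u..v}) - (\<Union>(u, v)\<in>C. {u<..<v}) \<subseteq> fst ` C \<union> snd ` C"
    by force
  ultimately show ?thesis
    by (rule negligible_subset)
qed

lemma emeasure_disjoint_UN_scaled_le:
  assumes "countable C" "disjoint_family_on I C"
    and "\<And>i. i \<in> C \<Longrightarrow> I i \<in> sets M" "\<And>i. i \<in> C \<Longrightarrow> I i \<in> sets N"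
    and "\<And>i. i \<in> C \<Longrightarrow> a * emeasure M (I i) \<le> b * emeasure N (I i)"
  shows "a * emeasure M (\<Union>i\<in>C. I i) \<le> b * emeasure N (\<Union>i\<in>C. I i)"
proof -
  have "a * emeasure M (\<Union>i\<in>C. I i) = (\<integral>\<^sup>+i. a * emeasure M (I i) \<partial>count_space C)"
    using assms by (simp add: emeasure_UN_countable nn_integral_cmult)
  also have "\<dots> \<le> (\<integral>\<^sup>+i. b * emeasure N (I i) \<partial>count_space C)"
    using assms by (intro nn_integral_mono) auto
  also have "\<dots> = b * emeasure N (\<Union>i\<in>C. I i)"
    using assms by (simp add: emeasure_UN_countable nn_integral_cmult)
  finally show ?thesis .
qed

lemma negligible_if_outer_measure_of_lebesgue_zero:
  assumes "outer_measure_of lebesgue E = 0"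
  shows "negligible E"
proof -
  obtain H where "H \<in> sets lebesgue" "E \<subseteq> H" "outer_measure_of lebesgue E = emeasure lebesgue H"
    using outer_measure_of_attain[of E lebesgue] by auto
  then have "H \<in> null_sets lebesgue"
    using assms by (simp add: null_sets_def)
  with \<open>E \<subseteq> H\<close> show ?thesis
    by (simp add: negligible_iff_null_sets null_sets_completion_subset)
qed

lemma outer_measure_of_lebesgue_bounded:
  fixes E :: "real set"
  assumes "bounded E"
  shows "outer_measure_of lebesgue E < \<infinity>"
proof -
  obtain c d where "E \<subseteq> {c..d}"
    using bounded_subset_cbox_symmetric[OF assms] by (metis cbox_interval)
  then have "outer_measure_of lebesgue E \<le> emeasure lebesgue {c..d}"
    using outer_measure_of_mono[of E "{c..d}" lebesgue] by simp
  also have "\<dots> < \<infinity>"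
    by (simp add: emeasure_lborel_Icc_eq)
  finally show ?thesis .
qed

lemma open_superset_outer_measure_of_lebesgue:
  assumes "outer_measure_of lebesgue E = ennreal m" "0 \<le> m" "e > 0"
  obtains W where "open W" "E \<subseteq> W" "emeasure lebesgue W \<le> ennreal (m + e)"
proof -
  obtain H where H: "H \<in> sets lebesgue" "E \<subseteq> H" "emeasure lebesgue H = ennreal m"
    using outer_measure_of_attain[of E lebesgue] assms(1) by auto
  obtain W where W: "open W" "H \<subseteq> W" "W - H \<in> lmeasurable" "emeasure lebesgue (W - H) < e"
    using sets_lebesgue_outer_open[OF H(1) assms(3)] by blast
  have "emeasure lebesgue W \<le> emeasure lebesgue H + emeasure lebesgue (W - H)"
    using H(1) W(2,3) emeasure_subadditive[of H lebesgue "W - H"] by (simp add: Un_absorb1)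
  also have "\<dots> \<le> ennreal m + ennreal e"
    using H(3) W(4) by (intro add_mono) auto
  also have "\<dots> = ennreal (m + e)"
    using assms(2,3) by (simp add: ennreal_plus)
  finally show ?thesis
    using H(2) W(1,2) that by blast
qed

context
  fixes F :: "real \<Rightarrow> real"
  assumes mono_F: "mono F" and cont_F: "continuous_on UNIV F"
begin

lemma interval_measure_Icc:
  assumes "u \<le> v"
  shows "emeasure (interval_measure F) {u..v} = ennreal (F v - F u)"
  using assms monoD[OF mono_F] cont_F by (rule emeasure_interval_measure_Icc)

lemma eventually_slope_nonneg: "\<forall>\<^sub>F p in intervals_around x. 0 \<le> slope F p"
  using eventually_intervals_around_less
proof eventually_elim
  fix p :: "real \<times> real" assume "case p of (u, v) \<Rightarrow> u < v"
  then obtain u v where "p = (u, v)" "u < v"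
    by (cases p) auto
  then show "0 \<le> slope F p"
    using monoD[OF mono_F, of u v] by (simp add: slope_def)
qed

lemma small_slopes_open_cover:
  assumes "0 \<le> r" "open W" "E \<subseteq> W"
    and small: "\<And>x. x \<in> E \<Longrightarrow> \<exists>\<^sub>F p in intervals_around x. slope F p < r"
  obtains G where "open G" "negligible (E - G)"
    "emeasure (interval_measure F) G \<le> r * emeasure lebesgue W"
proof -
  obtain C where C: "countable C" "\<And>u v. (u, v) \<in> C \<Longrightarrow> u < v \<and> {u..v} \<subseteq> W \<and> slope F (u, v) < r"
    "disjoint_family_on (\<lambda>(u, v). {u..v}) C" "negligible (E \<inter> W - (\<Union>(u, v)\<in>C. {u..v}))"
  proof (rule Vitali_covering_intervals_within[OF \<open>open W\<close>])
    show "\<exists>\<^sub>F (u, v) in intervals_around x. slope F (u, v) < r" if "x \<in> E" for x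
      using small[OF that] by (simp add: case_prod_unfold)
  qed (use that in blast)
  let ?I = "\<lambda>(u, v). {u..v :: real}"
  let ?U = "\<Union>i\<in>C. ?I i"
  \<comment> \<open>the interiors, so that \<open>G\<close> is open; only the countably many endpoints are lost\<close>
  let ?G = "\<Union>(u, v)\<in>C. {u<..<v}"
  have G_U: "?G \<subseteq> ?U"
    by (intro UN_mono) (auto split: prod.splits)
  have U_W: "?U \<subseteq> W"
    using C(2) by (intro UN_least) (auto split: prod.splits)
  have U: "?U \<in> sets borel"
    using C(1) by (intro sets.countable_UN'') (auto split: prod.splits)
  show ?thesis
  proof
    show "open ?G" by (auto split: prod.splits)
    have "E - ?G \<subseteq> (E \<inter> W - ?U) \<union> (?U - ?G)"
      using \<open>E \<subseteq> W\<close> by blast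
    moreover have "negligible (?U - ?G)"
      using negligible_UN_Icc_Diff_UN_Ioo[OF C(1)] by (simp add: case_prod_unfold)
    ultimately show "negligible (E - ?G)"
      using C(4) by (meson negligible_Un negligible_subset)
    have "emeasure (interval_measure F) ?G \<le> 1 * emeasure (interval_measure F) ?U"
      using G_U U by (simp add: emeasure_mono)
    also have "\<dots> \<le> r * emeasure lebesgue ?U"
    proof (rule emeasure_disjoint_UN_scaled_le[OF C(1,3)])
      fix i assume "i \<in> C"
      then obtain u v where i: "i = (u, v)" "u < v" "slope F (u, v) < r"
        using C(2) by (cases i) auto
      then have "F v - F u \<le> r * (v - u)"
        by (simp add: slope_def pos_divide_less_eq)
      then show "1 * emeasure (interval_measure F) (?I i) \<le> r * emeasure lebesgue (?I i)"
        using i \<open>0 \<le> r\<close> by (simp add: interval_measure_Icc ennreal_mult[symmetric] ennreal_leI)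
    qed (auto split: prod.splits)
    also have "\<dots> \<le> r * emeasure lebesgue W"
      using U U_W \<open>open W\<close> by (intro mult_left_mono emeasure_mono) auto
    finally show "emeasure (interval_measure F) ?G \<le> r * emeasure lebesgue W" .
  qed
qed

lemma large_slopes_outer_measure:
  assumes "0 \<le> s" "open G" "negligible (E - G)"
    and large: "\<And>x. x \<in> E \<Longrightarrow> \<exists>\<^sub>F p in intervals_around x. s < slope F p"
  shows "s * outer_measure_of lebesgue E \<le> emeasure (interval_measure F) G"
proof -
  obtain C where C: "countable C" "\<And>u v. (u, v) \<in> C \<Longrightarrow> u < v \<and> {u..v} \<subseteq> G \<and> s < slope F (u, v)"
    "disjoint_family_on (\<lambda>(u, v). {u..v}) C" "negligible (E \<inter> G - (\<Union>(u, v)\<in>C. {u..v}))"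
  proof (rule Vitali_covering_intervals_within[OF \<open>open G\<close>])
    show "\<exists>\<^sub>F (u, v) in intervals_around x. s < slope F (u, v)" if "x \<in> E" for x
      using large[OF that] by (simp add: case_prod_unfold)
  qed (use that in blast)
  let ?I = "\<lambda>(u, v). {u..v :: real}"
  let ?U = "\<Union>i\<in>C. ?I i"
  let ?N = "(E \<inter> G - ?U) \<union> (E - G)"
  have U: "?U \<in> sets lebesgue"
    using C(1) by (intro sets.countable_UN'') (auto split: prod.splits)
  have N: "?N \<in> null_sets lebesgue"
    using C(4) assms(3) by (simp add: negligible_iff_null_sets[symmetric])
  have "outer_measure_of lebesgue E \<le> outer_measure_of lebesgue (?U \<union> ?N)"
    by (intro outer_measure_of_mono) auto
  also have "\<dots> = emeasure lebesgue (?U \<union> ?N)"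
    using U N by (intro outer_measure_of_eq) auto
  also have "\<dots> = emeasure lebesgue ?U"
    using U N by (rule emeasure_Un_null_set)
  finally have "s * outer_measure_of lebesgue E \<le> s * emeasure lebesgue ?U"
    by (rule mult_left_mono) simp
  also have "\<dots> \<le> 1 * emeasure (interval_measure F) ?U"
  proof (rule emeasure_disjoint_UN_scaled_le[OF C(1,3)])
    fix i assume "i \<in> C"
    then obtain u v where i: "i = (u, v)" "u < v" "s < slope F (u, v)"
      using C(2) by (cases i) auto
    then have "s * (v - u) \<le> F v - F u"
      by (simp add: slope_def pos_less_divide_eq)
    then show "s * emeasure lebesgue (?I i) \<le> 1 * emeasure (interval_measure F) (?I i)"
      using i \<open>0 \<le> s\<close> by (simp add: interval_measure_Icc ennreal_mult[symmetric] ennreal_leI)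
  qed (auto split: prod.splits)
  also have "\<dots> \<le> emeasure (interval_measure F) G"
    using C(2) assms(2) by (auto intro!: emeasure_mono split: prod.splits)
  finally show ?thesis .
qed

lemma negligible_small_and_large_slopes:
  assumes "0 \<le> r" "r < s" "bounded E"
    and small: "\<And>x. x \<in> E \<Longrightarrow> \<exists>\<^sub>F p in intervals_around x. slope F p < r"
    and large: "\<And>x. x \<in> E \<Longrightarrow> \<exists>\<^sub>F p in intervals_around x. s < slope F p"
  shows "negligible E"
proof -
  obtain m where m: "outer_measure_of lebesgue E = ennreal m" "0 \<le> m"
    using outer_measure_of_lebesgue_bounded[OF assms(3)] by (cases rule: ennreal_cases) auto
  \<comment> \<open>\<open>s |E|\<^sup>* \<le> \<mu>\<^sub>F G \<le> r |W| \<le> r (|E|\<^sup>* + e)\<close> for every \<open>e > 0\<close>, which forces \<open>|E|\<^sup>* = 0\<close>\<close>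
  have bound: "s * m \<le> r * (m + e)" if e: "e > 0" for e
  proof -
    obtain W where W: "open W" "E \<subseteq> W" "emeasure lebesgue W \<le> ennreal (m + e)"
      using open_superset_outer_measure_of_lebesgue[OF m e] by blast
    obtain G where G: "open G" "negligible (E - G)"
      "emeasure (interval_measure F) G \<le> r * emeasure lebesgue W"
      by (rule small_slopes_open_cover[OF assms(1) W(1,2) small])
    have "ennreal (s * m) = s * outer_measure_of lebesgue E"
      using assms(1,2) m by (simp add: ennreal_mult)
    also have "\<dots> \<le> emeasure (interval_measure F) G"
      using assms(1,2) G(1,2) large by (intro large_slopes_outer_measure) auto
    also have "\<dots> \<le> r * ennreal (m + e)"
      using G(3) mult_left_mono[OF W(3)] by (rule order_trans) simp
    also have "\<dots> = ennreal (r * (m + e))"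
      using assms(1) m(2) e by (simp add: ennreal_mult)
    finally show ?thesis
      using assms(1) m(2) e by (simp add: ennreal_le_iff)
  qed
  have "s * m \<le> r * m"
  proof (rule field_le_epsilon)
    fix e :: real assume "e > 0"
    have "r * (e / (r + 1)) \<le> e"
      using \<open>e > 0\<close> assms(1) by (simp add: divide_simps)
    then show "s * m \<le> r * m + e"
      using bound[of "e / (r + 1)"] \<open>e > 0\<close> assms(1) by (simp add: distrib_left)
  qed
  then have "(s - r) * m \<le> 0"
    by (simp add: left_diff_distrib)
  then have "m = 0"
    using assms(2) m(2) by (simp add: mult_le_0_iff)
  then show ?thesis
    using m(1) by (simp add: negligible_if_outer_measure_of_lebesgue_zero)
qed

lemma negligible_unbounded_slopes:
  assumes "bounded E"
    and large: "\<And>x n. x \<in> E \<Longrightarrow> \<exists>\<^sub>F p in intervals_around x. real n < slope F p"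
  shows "negligible E"
proof -
  obtain c where "0 < c" and E: "E \<subseteq> {-c<..<c}"
    using bounded_subset_ballD[OF assms(1), of 0] by (auto simp: ball_eq_greaterThanLessThan)
  obtain m where m: "outer_measure_of lebesgue E = ennreal m" "0 \<le> m"
    using outer_measure_of_lebesgue_bounded[OF assms(1)] by (cases rule: ennreal_cases) auto
  have bound: "real n * m \<le> F c - F (-c)" for n :: nat
  proof -
    have "ennreal (real n * m) = real n * outer_measure_of lebesgue E"
      using m by (simp add: ennreal_mult)
    also have "\<dots> \<le> emeasure (interval_measure F) {-c<..<c}"
      using E large by (intro large_slopes_outer_measure) auto
    also have "\<dots> \<le> emeasure (interval_measure F) {-c..c}"
      by (intro emeasure_mono) auto
    also have "\<dots> = ennreal (F c - F (-c))"
      using \<open>0 < c\<close> by (intro interval_measure_Icc) simp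
    finally show ?thesis
      using monoD[OF mono_F, of "-c" c] \<open>0 < c\<close> by (auto simp: ennreal_le_iff2)
  qed
  have "m = 0"
  proof (rule ccontr)
    assume "m \<noteq> 0"
    obtain n :: nat where "(F c - F (-c)) / m < real n"
      using reals_Archimedean2 by blast
    with bound[of n] \<open>m \<noteq> 0\<close> m(2) show False
      by (simp add: divide_less_eq)
  qed
  then show ?thesis
    using m(1) by (simp add: negligible_if_outer_measure_of_lebesgue_zero)
qed

lemma differentiable_if_slopes_controlled:
  assumes bounded_above: "\<exists>s. \<forall>\<^sub>F p in intervals_around x. slope F p \<le> s"
    and no_gap: "\<And>r s. r \<in> \<rat> \<Longrightarrow> s \<in> \<rat> \<Longrightarrow> 0 \<le> r \<Longrightarrow> r < s \<Longrightarrow>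
      \<not> ((\<exists>\<^sub>F p in intervals_around x. slope F p < r) \<and> (\<exists>\<^sub>F p in intervals_around x. s < slope F p))"
  shows "F differentiable (at x)"
proof -
  let ?S = "{s. \<forall>\<^sub>F p in intervals_around x. slope F p \<le> s}"
  note nonneg = eventually_slope_nonneg[of x]
  have "0 \<le> s" if "s \<in> ?S" for s
    using eventually_happens'[OF intervals_around_neq_bot eventually_conj[OF nonneg]] that by force
  then have bdd: "bdd_below ?S"
    by (rule bdd_belowI)
  \<comment> \<open>the upper limit of the slopes; as no pair of rationals separates the lower limit
    from it, the lower limit is \<open>L\<close> as well\<close>
  define L where "L = Inf ?S"
  have "(slope F \<longlongrightarrow> L) (intervals_around x)"
  proof (rule order_tendstoI)
    fix a assume "L < a"
    then obtain s where "s \<in> ?S" "s < a"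
      using cInf_lessD[of ?S a] bounded_above by (auto simp: L_def)
    then show "\<forall>\<^sub>F p in intervals_around x. slope F p < a"
      by (auto elim: eventually_mono)
  next
    fix a assume "a < L"
    show "\<forall>\<^sub>F p in intervals_around x. a < slope F p"
    proof (cases "a < 0")
      case True
      then show ?thesis
        using nonneg by (auto elim: eventually_mono)
    next
      case False
      obtain r where r: "r \<in> \<rat>" "a < r" "r < L"
        using Rats_dense_in_real[OF \<open>a < L\<close>] by blast
      obtain s where s: "s \<in> \<rat>" "r < s" "s < L"
        using Rats_dense_in_real[OF \<open>r < L\<close>] by blast
      have "s \<notin> ?S"
        using s(3) bdd cInf_lower[of s ?S] by (auto simp: L_def)
      then have "\<exists>\<^sub>F p in intervals_around x. s < slope F p"
        by (simp add: not_eventually not_le)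
      then have "\<forall>\<^sub>F p in intervals_around x. r \<le> slope F p"
        using no_gap[OF r(1) s(1) _ s(2)] False r(2) by (simp add: not_frequently not_less)
      then show ?thesis
        using r(2) by (auto elim: eventually_mono)
    qed
  qed
  then show ?thesis
    using has_real_derivative_if_slope_tendsto real_differentiable_def by blast
qed

lemma nondifferentiable_slopes_cases:
  assumes "\<not> F differentiable (at x)"
  obtains "\<forall>n::nat. \<exists>\<^sub>F p in intervals_around x. real n < slope F p"
  | r s where "r \<in> \<rat>" "s \<in> \<rat>" "0 \<le> r" "r < s"
      "\<exists>\<^sub>F p in intervals_around x. slope F p < r" "\<exists>\<^sub>F p in intervals_around x. s < slope F p"
proof (cases "\<forall>n::nat. \<exists>\<^sub>F p in intervals_around x. real n < slope F p")
  case True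
  then show ?thesis by (rule that(1))
next
  case False
  then obtain n :: nat where "\<not> (\<exists>\<^sub>F p in intervals_around x. real n < slope F p)"
    by blast
  then have "\<exists>s. \<forall>\<^sub>F p in intervals_around x. slope F p \<le> s"
    by (auto simp: not_frequently not_less)
  with assms show ?thesis
    using differentiable_if_slopes_controlled that(2) by blast
qed

theorem negligible_nondifferentiable_mono: "negligible {x. \<not> F differentiable (at x)}"
proof (subst negligible_on_intervals, intro allI)
  fix c d :: real
  let ?A = "{x \<in> {c..d}. \<forall>n::nat. \<exists>\<^sub>F p in intervals_around x. real n < slope F p}"
  let ?Q = "{(r, s). r \<in> \<rat> \<and> s \<in> \<rat> \<and> 0 \<le> r \<and> r < s}"
  let ?B = "\<lambda>(r, s). {x \<in> {c..d}. (\<exists>\<^sub>F p in intervals_around x. slope F p < r) \<and>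
    (\<exists>\<^sub>F p in intervals_around x. s < slope F p)}"
  have "{x. \<not> F differentiable (at x)} \<inter> {c..d} \<subseteq> ?A \<union> (\<Union>q\<in>?Q. ?B q)"
  proof
    fix x assume x: "x \<in> {x. \<not> F differentiable (at x)} \<inter> {c..d}"
    then have "\<not> F differentiable (at x)"
      by simp
    then show "x \<in> ?A \<union> (\<Union>q\<in>?Q. ?B q)"
    proof (cases rule: nondifferentiable_slopes_cases[case_names unbounded gap])
      case unbounded
      then show ?thesis using x by simp
    next
      case (gap r s)
      then show ?thesis using x by (intro UnI2 UN_I[of "(r, s)"]) auto
    qed
  qed
  moreover have "negligible ?A"
    by (rule negligible_unbounded_slopes) (auto intro: bounded_subset[OF bounded_closed_interval])
  moreover have "countable ?Q"
    by (rule countable_subset[of _ "\<rat> \<times> \<rat>"]) (auto intro: countable_SIGMA countable_rat)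
  then have "negligible (\<Union>q\<in>?Q. ?B q)"
  proof (rule negligible_countable_Union[OF countable_image])
    fix S assume "S \<in> ?B ` ?Q"
    then obtain r s where "r \<in> \<rat>" "s \<in> \<rat>" "0 \<le> r" "r < s" "S = ?B (r, s)"
      by blast
    then show "negligible S"
      by (intro negligible_small_and_large_slopes[of r s]) (auto intro: bounded_subset[OF bounded_closed_interval])
  qed
  ultimately show "negligible ({x. \<not> F differentiable (at x)} \<inter> cbox c d)"
    unfolding cbox_interval by (meson negligible_Un negligible_subset)
qed

end

lemma negligible_nondifferentiable_mono_on:
  fixes f :: "real \<Rightarrow> real"
  assumes "mono_on {c..d} f" "continuous_on {c..d} f"
  shows "negligible {x \<in> {c<..<d}. \<not> f differentiable (at x)}"
proof (cases "c \<le> d")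
  case False
  then show ?thesis by simp
next
  case True
  define F where "F x = f (max c (min d x))" for x
  have "mono F"
  proof (rule monoI)
    fix x y :: real assume "x \<le> y"
    then show "F x \<le> F y"
      unfolding F_def using True by (intro mono_onD[OF assms(1)]) auto
  qed
  moreover have "continuous_on UNIV F"
  proof -
    have "continuous_on UNIV (\<lambda>x. max c (min d x))"
      by (intro continuous_intros)
    moreover have "range (\<lambda>x. max c (min d x)) \<subseteq> {c..d}"
      using True by auto
    ultimately show ?thesis
      unfolding F_def by (rule continuous_on_compose2[OF assms(2)])
  qed
  ultimately have N: "negligible {x. \<not> F differentiable (at x)}"
    by (rule negligible_nondifferentiable_mono)
  have "f differentiable (at x)" if x: "x \<in> {c<..<d}" and "F differentiable (at x)" for x
  proof (rule differentiable_transform_within[OF \<open>F differentiable (at x)\<close> _ UNIV_I])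
    show "0 < min (x - c) (d - x)"
      using x by simp
    fix y assume "dist y x < min (x - c) (d - x)"
    then have "c < y" "y < d"
      by (auto simp: dist_real_def abs_less_iff)
    then show "F y = f y"
      by (simp add: F_def)
  qed
  then show ?thesis
    by (intro negligible_subset[OF N]) blast
qed

lemma min_endpoints_le_if_no_local_min:
  fixes \<phi> :: "real \<Rightarrow> real"
  assumes "continuous_on {u..v} \<phi>" "\<And>y. y \<in> {u<..<v} \<Longrightarrow> \<not> (\<forall>\<^sub>F z in at y. \<phi> y \<le> \<phi> z)"
    and "t \<in> {u..v}"
  shows "min (\<phi> u) (\<phi> v) \<le> \<phi> t"
proof -
  obtain m where m: "m \<in> {u..v}" "\<forall>z\<in>{u..v}. \<phi> m \<le> \<phi> z"
    using continuous_attains_inf[OF compact_Icc _ assms(1)] assms(3) by auto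
  have "m \<notin> {u<..<v}"
  proof
    assume "m \<in> {u<..<v}"
    moreover from this have "\<forall>\<^sub>F z in at m. \<phi> m \<le> \<phi> z"
      using m(2) by (auto simp: eventually_at_topological intro!: exI[of _ "{u<..<v}"])
    ultimately show False
      using assms(2) by blast
  qed
  then have "m = u \<or> m = v"
    using m(1) by auto
  then show ?thesis
    using m(2) assms(3) by auto
qed

lemma negligible_nondifferentiable_no_local_min_interval:
  fixes \<phi> :: "real \<Rightarrow> real"
  assumes cont: "continuous_on {p..q} \<phi>"
    and no_min: "\<And>y. y \<in> {p<..<q} \<Longrightarrow> \<not> (\<forall>\<^sub>F z in at y. \<phi> y \<le> \<phi> z)"
  shows "negligible {x \<in> {p<..<q}. \<not> \<phi> differentiable (at x)}"
proof (cases "p \<le> q")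
  case False
  then show ?thesis by simp
next
  case True
  obtain m where m: "m \<in> {p..q}" "\<forall>x\<in>{p..q}. \<phi> x \<le> \<phi> m"
    using continuous_attains_sup[OF compact_Icc _ cont] True by auto
  have min_le: "min (\<phi> x) (\<phi> y) \<le> \<phi> t" if "p \<le> x" "t \<in> {x..y}" "y \<le> q" for x y t
    using that by (intro min_endpoints_le_if_no_local_min continuous_on_subset[OF cont] no_min) auto
  have "mono_on {p..m} \<phi>"
  proof (rule mono_onI)
    fix x y assume "x \<in> {p..m}" "y \<in> {p..m}" "x \<le> y"
    then show "\<phi> x \<le> \<phi> y"
      using min_le[of x y m] m by auto
  qed
  moreover have "mono_on {m..q} (\<lambda>x. - \<phi> x)"
  proof (rule mono_onI)
    fix x y assume "x \<in> {m..q}" "y \<in> {m..q}" "x \<le> y"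
    then show "- \<phi> x \<le> - \<phi> y"
      using min_le[of m x y] m by auto
  qed
  moreover have "continuous_on {p..m} \<phi>" "continuous_on {m..q} (\<lambda>x. - \<phi> x)"
    using m(1) by (auto intro!: continuous_on_minus intro: continuous_on_subset[OF cont])
  ultimately have N: "negligible ({x \<in> {p<..<m}. \<not> \<phi> differentiable (at x)} \<union>
      {x \<in> {m<..<q}. \<not> (\<lambda>x. - \<phi> x) differentiable (at x)} \<union> {m})"
    by (intro negligible_Un negligible_nondifferentiable_mono_on negligible_sing)
  have diff_minus: "\<phi> differentiable (at x)" if "(\<lambda>x. - \<phi> x) differentiable (at x)" for x
    using differentiable_minus[OF that] by simp
  show ?thesis
    by (rule negligible_subset[OF N]) (auto simp: not_less_iff_gr_or_eq dest: diff_minus)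
qed

lemma negligible_nondifferentiable_no_local_min:
  fixes \<phi> :: "real \<Rightarrow> real"
  assumes "open S" "continuous_on S \<phi>"
    and no_min: "\<And>y. y \<in> S \<Longrightarrow> \<not> (\<forall>\<^sub>F z in at y. \<phi> y \<le> \<phi> z)"
  shows "negligible {x \<in> S. \<not> \<phi> differentiable (at x)}"
proof (subst locally_negligible_alt, intro ballI)
  let ?N = "{x \<in> S. \<not> \<phi> differentiable (at x)}"
  fix x assume "x \<in> ?N"
  then obtain e where "e > 0" "ball x e \<subseteq> S"
    using assms(1) openE by blast
  then have sub: "{x - e/2..x + e/2} \<subseteq> S"
    by (auto simp: subset_eq dist_real_def)
  have "negligible {y \<in> {x - e/2<..<x + e/2}. \<not> \<phi> differentiable (at y)}"
    using sub by (intro negligible_nondifferentiable_no_local_min_interval no_min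
        continuous_on_subset[OF assms(2)]) auto
  then show "\<exists>U. openin (top_of_set ?N) U \<and> x \<in> U \<and> negligible U"
    using \<open>x \<in> ?N\<close> \<open>e > 0\<close>
    by (intro exI[of _ "?N \<inter> {x - e/2<..<x + e/2}"]) (auto elim: negligible_subset)
qed

lemma zero_in_visc_subdiff_if_local_min:
  fixes \<phi> :: "real \<Rightarrow> real"
  assumes "y \<in> {a<..<b}" "\<forall>\<^sub>F z in at y. \<phi> y \<le> \<phi> z"
  shows "0 \<in> visc_subdiff a b \<phi> y"
proof -
  obtain V where V: "open V" "y \<in> V" "\<forall>z\<in>V. z \<noteq> y \<longrightarrow> \<phi> y \<le> \<phi> z"
    using assms(2) by (auto simp: eventually_at_topological)
  have "C1_on (V \<inter> {a<..<b}) (\<lambda>_. \<phi> y)"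
    unfolding C1_on_def by (intro exI[of _ "\<lambda>_. 0"]) auto
  then show ?thesis
    unfolding visc_subdiff_def using V assms(1)
    by (intro CollectI exI[of _ "V \<inter> {a<..<b}"] exI[of _ "\<lambda>_. \<phi> y"]) auto
qed

lemma no_local_min_outside_closure_zero_visc_subdiff:
  fixes \<phi> :: "real \<Rightarrow> real"
  assumes y: "y \<in> {a<..<b} - closure {y. 0 \<in> visc_subdiff a b \<phi> y}"
  shows "\<not> (\<forall>\<^sub>F z in at y. \<phi> y \<le> \<phi> z)"
proof
  assume "\<forall>\<^sub>F z in at y. \<phi> y \<le> \<phi> z"
  moreover have "y \<in> {a<..<b}"
    using y by blast
  ultimately have "y \<in> {y. 0 \<in> visc_subdiff a b \<phi> y}"
    by (simp add: zero_in_visc_subdiff_if_local_min)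
  then have "y \<in> closure {y. 0 \<in> visc_subdiff a b \<phi> y}"
    by (rule closure_subset[THEN subsetD])
  with y show False
    by blast
qed

lemma zero_in_lim_subdiff_if_in_closure:
  assumes x: "x \<in> closure {y. 0 \<in> visc_subdiff a b \<phi> y}"
  shows "(\<exists>xs. (\<forall>k. xs k \<in> {a<..<b} \<and> 0 \<in> visc_subdiff a b \<phi> (xs k)) \<and> xs \<longlonglongrightarrow> x)
    \<and> 0 \<in> lim_subdiff a b \<phi> x"
proof -
  obtain xs where xs_Z: "\<forall>k. 0 \<in> visc_subdiff a b \<phi> (xs k)" and lim: "xs \<longlonglongrightarrow> x"
    using closure_sequential[THEN iffD1, OF x] by auto
  have "visc_subdiff a b \<phi> y = {}" if "y \<notin> {a<..<b}" for y
    using that unfolding visc_subdiff_def by blast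
  then have xs: "\<forall>k. xs k \<in> {a<..<b} \<and> 0 \<in> visc_subdiff a b \<phi> (xs k)"
    using xs_Z by (metis empty_iff)
  moreover have "0 \<in> lim_subdiff a b \<phi> x"
    unfolding lim_subdiff_def using xs lim by (intro CollectI exI[of _ xs] exI[of _ "\<lambda>_. 0"]) simp
  ultimately show ?thesis
    using lim by blast
qed

theorem proposition2p8:
  fixes a b :: real and \<phi> :: "real \<Rightarrow> real"
  assumes "a < b" and "continuous_on {a<..<b} \<phi>"
  shows "AE x in lebesgue. x \<in> {a<..<b} \<longrightarrow>
           (\<phi> differentiable (at x) \<or>
            ((\<exists>xs. (\<forall>k. xs k \<in> {a<..<b} \<and> 0 \<in> visc_subdiff a b \<phi> (xs k)) \<and> xs \<longlonglongrightarrow> x)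
             \<and> 0 \<in> lim_subdiff a b \<phi> x))"
proof -
  let ?U = "{a<..<b} - closure {y. 0 \<in> visc_subdiff a b \<phi> y}"
  have "negligible {x \<in> ?U. \<not> \<phi> differentiable (at x)}"
  proof (rule negligible_nondifferentiable_no_local_min)
    show "open ?U"
      by (intro open_Diff) auto
    show "continuous_on ?U \<phi>"
      using assms(2) by (rule continuous_on_subset) auto
  qed (rule no_local_min_outside_closure_zero_visc_subdiff)
  then have "{x \<in> ?U. \<not> \<phi> differentiable (at x)} \<in> null_sets lebesgue"
    by (simp add: negligible_iff_null_sets)
  then show ?thesis
    by (rule AE_I') (use zero_in_lim_subdiff_if_in_closure[of _ a b \<phi>] in blast)
qed

end
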